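(* Let $p$ be a prime, $\mathcal{O}$ an order in $B_p$, and let $\beta_1,\beta_2$ be linearly independent elements of $\mathcal{O}^T$. Suppose $N(\beta_1)\le p$ and that $\beta_2$ has minimal norm among the elements of $\beta_2+\mathbb{Z}\beta_1$. Then $|\frac12\mathrm{Tr}(\beta_1\overline{\beta_2})|$ equals the least non-negative integer $t$ with $t^2\equiv N(\beta_1)N(\beta_2)\pmod p$.
   Context: $B_p$ is the quaternion algebra over $\mathbb{Q}$ ramified exactly at $p$ and $\infty$, with canonical involution $\overline{x}$, reduced norm $N(x)=x\overline{x}$ and reduced trace $\mathrm{Tr}(x)=x+\overline{x}$. The Gross lattice of an order $\mathcal{O}$ is $\mathcal{O}^T=\{2x-\mathrm{Tr}(x):x\in\mathcal{O}\}$. *)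

theory Defs
  imports "HOL-Number_Theory.Number_Theory"
begin

text \<open>Quaternion algebras (a,b)_Q over the rationals: basis 1,i,j,k=ij with
  i^2 = a, j^2 = b, ij = -ji.  Elements are coordinate quadruples.\<close>

datatype quat = Quat rat rat rat rat

fun q0 :: "quat \<Rightarrow> rat" where "q0 (Quat x0 x1 x2 x3) = x0"

definition qof :: "rat \<Rightarrow> quat" where "qof r = Quat r 0 0 0"

fun qadd :: "quat \<Rightarrow> quat \<Rightarrow> quat" where
  "qadd (Quat x0 x1 x2 x3) (Quat y0 y1 y2 y3) = Quat (x0+y0) (x1+y1) (x2+y2) (x3+y3)"

fun qneg :: "quat \<Rightarrow> quat" where
  "qneg (Quat x0 x1 x2 x3) = Quat (-x0) (-x1) (-x2) (-x3)"

definition qsub :: "quat \<Rightarrow> quat \<Rightarrow> quat" where "qsub x y = qadd x (qneg y)"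

fun qscale :: "rat \<Rightarrow> quat \<Rightarrow> quat" where
  "qscale c (Quat x0 x1 x2 x3) = Quat (c*x0) (c*x1) (c*x2) (c*x3)"

fun qmul :: "rat \<Rightarrow> rat \<Rightarrow> quat \<Rightarrow> quat \<Rightarrow> quat" where
  "qmul a b (Quat x0 x1 x2 x3) (Quat y0 y1 y2 y3) =
     Quat (x0*y0 + a*x1*y1 + b*x2*y2 - a*b*x3*y3)
          (x0*y1 + x1*y0 - b*x2*y3 + b*x3*y2)
          (x0*y2 + x2*y0 + a*x1*y3 - a*x3*y1)
          (x0*y3 + x3*y0 + x1*y2 - x2*y1)"

fun qconj :: "quat \<Rightarrow> quat" where
  "qconj (Quat x0 x1 x2 x3) = Quat x0 (-x1) (-x2) (-x3)"

definition qtr :: "quat \<Rightarrow> rat" where "qtr x = 2 * q0 x"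

fun qnorm :: "rat \<Rightarrow> rat \<Rightarrow> quat \<Rightarrow> rat" where
  "qnorm a b (Quat x0 x1 x2 x3) = x0^2 - a*x1^2 - b*x2^2 + a*b*x3^2"

text \<open>The Hilbert symbol (a,b)_q at a finite prime q is trivial iff the conic
  a x^2 + b y^2 = z^2 has a nontrivial solution in Q_q, iff it has a primitive
  solution modulo q^k for every k.\<close>
definition hilbert_split_at :: "int \<Rightarrow> int \<Rightarrow> int \<Rightarrow> bool" where
  "hilbert_split_at a b q \<longleftrightarrow>
     (\<forall>k::nat. \<exists>x y z::int. [a*x^2 + b*y^2 = z^2] (mod q^k) \<and>
                        \<not> (q dvd x \<and> q dvd y \<and> q dvd z))"

text \<open>(a,b)_Q is ramified exactly at p and \<infinity> (i.e. is a model of B_p).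
  Ramified at \<infinity> iff a<0 and b<0.\<close>
definition ramified_exactly_at_p_inf :: "int \<Rightarrow> int \<Rightarrow> int \<Rightarrow> bool" where
  "ramified_exactly_at_p_inf p a b \<longleftrightarrow>
     a < 0 \<and> b < 0 \<and> (\<forall>q::int. prime q \<longrightarrow> (\<not> hilbert_split_at a b q \<longleftrightarrow> q = p))"

definition is_order :: "rat \<Rightarrow> rat \<Rightarrow> quat set \<Rightarrow> bool" where
  "is_order a b R \<longleftrightarrow>
     qof 1 \<in> R \<and>
     (\<forall>x\<in>R. \<forall>y\<in>R. qadd x y \<in> R \<and> qmul a b x y \<in> R) \<and>
     (\<forall>x\<in>R. qneg x \<in> R) \<and>
     (\<exists>e0 e1 e2 e3.
        R = {qadd (qadd (qscale (of_int c0) e0) (qscale (of_int c1) e1))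
                  (qadd (qscale (of_int c2) e2) (qscale (of_int c3) e3)) | c0 c1 c2 c3. True} \<and>
        (\<forall>c0 c1 c2 c3. qadd (qadd (qscale c0 e0) (qscale c1 e1))
                             (qadd (qscale c2 e2) (qscale c3 e3)) = qof 0
            \<longrightarrow> c0 = 0 \<and> c1 = 0 \<and> c2 = 0 \<and> c3 = 0))"

definition gross_lattice :: "quat set \<Rightarrow> quat set" where
  "gross_lattice R = {qsub (qscale 2 x) (qof (qtr x)) | x. x \<in> R}"

end

(* Norms and traces of elements of an order are integers, so the Gram matrix of beta1, beta2
   (entries N1 = N beta1, N2 = N beta2 and t = Tr(beta1 conj beta2)/2) is integral, and for
   elements of the Gross lattice its determinant N1 N2 - t^2 is divisible by 4.  For odd p, if p
   did not divide the determinant D, the binary form N1 X^2 + 2t XY + N2 Y^2 would represent -D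
   modulo every p^K; then X beta1 + Y beta2 + w, with w the cross product of beta1 and beta2
   (orthogonal to both, of norm D), is isotropic for the norm form on pure quaternions modulo
   p^K, and its content is bounded because its inner product with w is D.  This yields
   primitive solutions of a x^2 + b y^2 = z^2 modulo every p^K, i.e. (a,b) would split at p.
   Hence t^2 = N1 N2 (mod p).  Reducedness of beta2 against beta1 gives 2|t| <= N1 <= p, and
   a square root of a residue modulo p lying in [0, p/2] is the least one. *)

theory Submission
  imports Defs
begin

section \<open>Quadratic congruences modulo prime powers\<close>

lemma odd_prime_not_dvd_two:
  fixes p :: int assumes "prime p" "p \<noteq> 2" shows "\<not> p dvd 2"
  using assms primes_dvd_imp_eq[of p 2] by auto

lemma coprime_prime_power_if_not_dvd:
  fixes p E :: int
  assumes "prime p" "\<not> p dvd E"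
  shows "coprime E (p^K)"
  using prime_imp_coprime[OF assms] by (simp add: coprime_commute)

lemma mult_square_lift_step:
  fixes p E m y :: int
  assumes p: "prime p" "p \<noteq> 2" and K: "K > 0" and m: "\<not> p dvd m"
    and y: "[E*y^2 = m] (mod p^K)"
  shows "\<exists>y'. [E*y'^2 = m] (mod p^Suc K)"
proof -
  obtain e where e: "E*y^2 - m = p^K * e"
    using y by (auto simp: cong_iff_dvd_diff dvd_def)
  have "[E*y^2 = m] (mod p)"
    using y K by (simp add: cong_dvd_modulus)
  then have "\<not> p dvd E*y^2"
    using m cong_dvd_iff by blast
  moreover have "E*y^2 = (E*y)*y"
    by (simp add: power2_eq_square)
  ultimately have "\<not> p dvd E*y"
    by (metis dvd_mult2)
  then have "\<not> p dvd 2*E*y"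
    using p odd_prime_not_dvd_two by (simp add: prime_dvd_mult_iff mult.assoc)
  then have "coprime (2*E*y) p"
    using p(1) prime_imp_coprime coprime_commute by blast
  then obtain u where u: "[2*E*y*u = 1] (mod p)"
    using cong_solve_coprime_int by blast
  define h where "h = - e * u"
  have "[e - e * (2*E*y*u) = e - e * 1] (mod p)"
    using u by (intro cong_diff cong_refl cong_scalar_left)
  then have "p dvd e + 2*E*y*h"
    unfolding h_def cong_iff_dvd_diff by (simp add: algebra_simps)
  then have "p^Suc K dvd p^K * (e + 2*E*y*h)"
    by (simp add: mult_dvd_mono)
  moreover have "p^Suc K dvd p^K * p^K * (E*h^2)"
  proof -
    have "p^Suc K dvd p^(K + K)"
      using K by (intro le_imp_power_dvd) simp
    then show ?thesis
      by (simp add: power_add)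
  qed
  moreover have "E*(y + p^K*h)^2 - m = p^K * (e + 2*E*y*h) + p^K * p^K * (E*h^2)"
    using e by (simp add: algebra_simps power2_eq_square)
  ultimately show ?thesis
    by (metis cong_iff_dvd_diff dvd_add)
qed

lemma mult_square_lift_mod_prime_power:
  fixes p E m y0 :: int
  assumes p: "prime p" "p \<noteq> 2" and m: "\<not> p dvd m" and y0: "[E*y0^2 = m] (mod p)"
  shows "\<exists>y. [E*y^2 = m] (mod p^K)"
proof (induction K)
  case 0
  show ?case
    by simp
next
  case (Suc K)
  show ?case
  proof (cases "K = 0")
    case True
    with y0 show ?thesis
      by auto
  next
    case False
    with Suc.IH show ?thesis
      using mult_square_lift_step[OF p _ m] by blast
  qed
qed

lemma inj_on_square_mod_prime:
  fixes p h :: int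
  assumes p: "prime p" and h: "2*h < p"
  shows "inj_on (\<lambda>x. x^2 mod p) {0..h}"
proof (rule inj_onI)
  fix x y assume x: "x \<in> {0..h}" and y: "y \<in> {0..h}" and "x^2 mod p = y^2 mod p"
  then have "p dvd (x - y) * (x + y)"
    by (simp add: mod_eq_dvd_iff power2_eq_square algebra_simps)
  then have "p dvd x - y \<or> p dvd x + y"
    using p by (simp add: prime_dvd_mult_iff)
  moreover have "\<not> p dvd x - y" if "x \<noteq> y"
    using dvd_imp_le_int[of "x - y" p] that x y h by auto
  moreover have "\<not> p dvd x + y" if "x \<noteq> y"
    using zdvd_imp_le[of p "x + y"] that x y h by auto
  ultimately show "x = y"
    by blast
qed

lemma square_plus_mult_square_cong_prime:
  fixes p E c :: int
  assumes p: "prime p" "p \<noteq> 2" and E: "\<not> p dvd E"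
  shows "\<exists>S Y. [S^2 + E*Y^2 = c] (mod p)"
proof -
  have "odd p"
    using p prime_ge_2_int[OF p(1)] by (simp add: prime_odd_int)
  then obtain h where ph: "p = 2*h + 1"
    by (rule oddE)
  then have "h \<ge> 0"
    using prime_ge_2_int[OF p(1)] by linarith
  \<comment> \<open>Two sets of \<open>h + 1 = (p + 1)/2\<close> residues modulo \<open>p\<close> must meet.\<close>
  define A where "A = (\<lambda>S. S^2 mod p) ` {0..h}"
  define B where "B = (\<lambda>Y. (c - E*Y^2) mod p) ` {0..h}"
  have "inj_on (\<lambda>Y. (c - E*Y^2) mod p) {0..h}"
  proof (rule inj_onI)
    fix x y assume x: "x \<in> {0..h}" and y: "y \<in> {0..h}" and "(c - E*x^2) mod p = (c - E*y^2) mod p"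
    then have "p dvd E * (y^2 - x^2)"
      by (simp add: mod_eq_dvd_iff algebra_simps)
    then have "y^2 mod p = x^2 mod p"
      using p E by (simp add: prime_dvd_mult_iff mod_eq_dvd_iff)
    then show "x = y"
      using inj_on_square_mod_prime[OF p(1), of h] x y ph by (auto dest: inj_onD)
  qed
  then have "card B = nat (h + 1)"
    by (simp add: B_def card_image)
  moreover have "card A = nat (h + 1)"
    using inj_on_square_mod_prime[OF p(1), of h] ph by (simp add: A_def card_image)
  moreover have "card (A \<union> B) \<le> card {0..<p}"
    using prime_gt_0_int[OF p(1)] by (intro card_mono) (auto simp: A_def B_def)
  moreover have "card A + card B = card (A \<union> B) + card (A \<inter> B)"
    by (rule card_Un_Int) (simp_all add: A_def B_def)
  ultimately have "card (A \<inter> B) \<noteq> 0"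
    using ph \<open>h \<ge> 0\<close> by simp
  then have "A \<inter> B \<noteq> {}"
    by auto
  then obtain S Y where "[S^2 = c - E*Y^2] (mod p)"
    by (auto simp: A_def B_def cong_def)
  then have "[S^2 + E*Y^2 = c - E*Y^2 + E*Y^2] (mod p)"
    by (rule cong_add) simp
  then have "[S^2 + E*Y^2 = c] (mod p)"
    by (simp only: diff_add_cancel)
  then show ?thesis
    by blast
qed

lemma square_plus_mult_square_cong_prime_power:
  fixes p E c :: int
  assumes p: "prime p" "p \<noteq> 2" and E: "\<not> p dvd E" and c: "\<not> p dvd c"
  shows "\<exists>S Y. [S^2 + E*Y^2 = c] (mod p^K)"
proof -
  obtain S0 Y0 where SY0: "[S0^2 + E*Y0^2 = c] (mod p)"
    using square_plus_mult_square_cong_prime[OF p E] by blast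
  show ?thesis
  proof (cases "p dvd S0")
    case False
    have S0: "[1*S0^2 = c - E*Y0^2] (mod p)"
      using SY0 by (simp add: cong_iff_dvd_diff algebra_simps)
    moreover have "\<not> p dvd c - E*Y0^2"
    proof
      assume "p dvd c - E*Y0^2"
      with S0 have "p dvd S0^2"
        using cong_dvd_iff by fastforce
      with False p(1) show False
        using prime_dvd_power by blast
    qed
    ultimately obtain S where "[1*S^2 = c - E*Y0^2] (mod p^K)"
      using mult_square_lift_mod_prime_power[OF p] by blast
    then have "[S^2 + E*Y0^2 = c] (mod p^K)"
      by (simp add: cong_iff_dvd_diff algebra_simps)
    then show ?thesis
      by blast
  next
    case True
    have Y0: "[E*Y0^2 = c - S0^2] (mod p)"
      using SY0 by (simp add: cong_iff_dvd_diff algebra_simps)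
    moreover have "\<not> p dvd c - S0^2"
    proof
      assume "p dvd c - S0^2"
      moreover have "p dvd S0^2"
        using True by (simp add: power2_eq_square)
      ultimately have "p dvd (c - S0^2) + S0^2"
        by (rule dvd_add)
      with c show False
        by simp
    qed
    ultimately obtain Y where "[E*Y^2 = c - S0^2] (mod p^K)"
      using mult_square_lift_mod_prime_power[OF p] by blast
    then have "[S0^2 + E*Y^2 = c] (mod p^K)"
      by (simp add: cong_iff_dvd_diff algebra_simps)
    then show ?thesis
      by blast
  qed
qed

lemma binary_form_cong_prime_power_of_unit_leading_coeff:
  fixes p A B C c :: int
  assumes p: "prime p" "p \<noteq> 2" and A: "\<not> p dvd A" and disc: "\<not> p dvd A*C - B^2"
    and c: "\<not> p dvd c"
  shows "\<exists>X Y. [A*X^2 + 2*B*X*Y + C*Y^2 = c] (mod p^K)"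
proof -
  have "\<not> p dvd A*c"
    using p(1) A c by (simp add: prime_dvd_mult_iff)
  then obtain S Y where SY: "[S^2 + (A*C - B^2)*Y^2 = A*c] (mod p^K)"
    using square_plus_mult_square_cong_prime_power[OF p disc] by blast
  obtain a' where a': "[A*a' = 1] (mod p^K)"
    using cong_solve_coprime_int coprime_prime_power_if_not_dvd[OF p(1) A] by blast
  define X where "X = a'*(S - B*Y)"
  have "[(A*a')*(S - B*Y) + B*Y = 1*(S - B*Y) + B*Y] (mod p^K)"
    using a' by (intro cong_add cong_mult cong_refl)
  then have "[(A*X + B*Y)^2 + (A*C - B^2)*Y^2 = S^2 + (A*C - B^2)*Y^2] (mod p^K)"
    unfolding X_def by (intro cong_add cong_pow cong_refl) (simp add: algebra_simps)
  also note SY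
  also have "(A*X + B*Y)^2 + (A*C - B^2)*Y^2 = A*(A*X^2 + 2*B*X*Y + C*Y^2)"
    by (simp add: algebra_simps power2_eq_square)
  finally have "[A*X^2 + 2*B*X*Y + C*Y^2 = c] (mod p^K)"
    using cong_mult_lcancel coprime_prime_power_if_not_dvd[OF p(1) A] by blast
  then show ?thesis
    by blast
qed

lemma not_dvd_binary_form_at_1_1:
  fixes p A B C :: int
  assumes p: "prime p" "p \<noteq> 2" and A: "p dvd A" and C: "p dvd C" and disc: "\<not> p dvd A*C - B^2"
  shows "\<not> p dvd A + 2*B + C"
proof
  assume "p dvd A + 2*B + C"
  with A C have "p dvd (A + 2*B + C) - A - C"
    by (intro dvd_diff)
  then have "p dvd B"
    using p odd_prime_not_dvd_two by (simp add: prime_dvd_mult_iff)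
  with A have "p dvd A*C - B^2"
    by (simp add: power2_eq_square)
  with disc show False ..
qed

lemma binary_form_cong_prime_power:
  fixes p A B C c :: int
  assumes p: "prime p" "p \<noteq> 2" and disc: "\<not> p dvd A*C - B^2" and c: "\<not> p dvd c"
  shows "\<exists>X Y. [A*X^2 + 2*B*X*Y + C*Y^2 = c] (mod p^K)"
proof (cases "p dvd A")
  case False
  then show ?thesis
    using binary_form_cong_prime_power_of_unit_leading_coeff[OF p _ disc c] by blast
next
  case A: True
  show ?thesis
  proof (cases "p dvd C")
    case False
    have "\<not> p dvd C*A - B^2"
      using disc by (simp add: mult.commute)
    then obtain Y X where "[C*Y^2 + 2*B*Y*X + A*X^2 = c] (mod p^K)"
      using binary_form_cong_prime_power_of_unit_leading_coeff[OF p False _ c] by blast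
    then have "[A*X^2 + 2*B*X*Y + C*Y^2 = c] (mod p^K)"
      by (simp add: algebra_simps)
    then show ?thesis
      by blast
  next
    case C: True
    have "\<not> p dvd A + 2*B + C"
      using not_dvd_binary_form_at_1_1[OF p A C disc] .
    moreover have "\<not> p dvd (A + 2*B + C)*C - (B + C)^2"
    proof -
      have "(A + 2*B + C)*C - (B + C)^2 = A*C - B^2"
        by (simp add: algebra_simps power2_eq_square)
      with disc show ?thesis
        by simp
    qed
    ultimately obtain X Y where "[(A + 2*B + C)*X^2 + 2*(B + C)*X*Y + C*Y^2 = c] (mod p^K)"
      using binary_form_cong_prime_power_of_unit_leading_coeff[OF p _ _ c] by blast
    moreover have "(A + 2*B + C)*X^2 + 2*(B + C)*X*Y + C*Y^2 = A*X^2 + 2*B*X*(X + Y) + C*(X + Y)^2"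
      by (simp add: algebra_simps power2_eq_square)
    ultimately show ?thesis
      by metis
  qed
qed

lemma Least_square_root_cong_prime:
  fixes p t n :: int
  assumes p: "prime p" and t: "2 * \<bar>t\<bar> \<le> p" and root: "[t^2 = n] (mod p)"
  shows "(LEAST s::nat. [int s ^ 2 = n] (mod p)) = nat \<bar>t\<bar>"
proof (rule Least_equality)
  have "int (nat \<bar>t\<bar>) ^ 2 = t^2"
    by simp
  with root show "[int (nat \<bar>t\<bar>) ^ 2 = n] (mod p)"
    by (simp only:)
next
  fix s :: nat
  assume "[int s ^ 2 = n] (mod p)"
  with root have "[t^2 = int s ^ 2] (mod p)"
    by (rule cong_trans[OF _ cong_sym])
  then have "p dvd t^2 - int s ^ 2"
    by (simp add: cong_iff_dvd_diff)
  also have "t^2 - int s ^ 2 = (\<bar>t\<bar> - int s) * (\<bar>t\<bar> + int s)"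
    by (simp add: power2_eq_square algebra_simps)
  finally have "p dvd \<bar>t\<bar> - int s \<or> p dvd \<bar>t\<bar> + int s"
    using p by (simp add: prime_dvd_mult_iff)
  moreover have "\<not> p dvd \<bar>t\<bar> - int s" and "\<not> p dvd \<bar>t\<bar> + int s" if "int s < \<bar>t\<bar>"
    using that t zdvd_imp_le[of p] by fastforce+
  ultimately show "nat \<bar>t\<bar> \<le> s"
    by fastforce
qed

section \<open>Splitting of the Hilbert symbol\<close>

lemma conic_cong_primitive:
  fixes p a b x y z :: int
  assumes p: "prime p" and g: "gcd x (gcd y z) \<noteq> 0"
    and xyz: "[a*x^2 + b*y^2 = z^2] (mod p^(k + 2 * multiplicity p (gcd x (gcd y z))))"
  shows "\<exists>x' y' z'. [a*x'^2 + b*y'^2 = z'^2] (mod p^k) \<and> \<not> (p dvd x' \<and> p dvd y' \<and> p dvd z')"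
proof -
  define g where "g = gcd x (gcd y z)"
  have "g \<noteq> 0"
    using assms(2) by (simp add: g_def)
  have "g dvd x" "g dvd y" "g dvd z"
    by (auto simp: g_def intro: dvd_trans)
  then obtain x' y' z' where xyz': "x = g*x'" "y = g*y'" "z = g*z'"
    by (metis dvdE)
  have primitive: "\<not> (p dvd x' \<and> p dvd y' \<and> p dvd z')"
  proof
    assume "p dvd x' \<and> p dvd y' \<and> p dvd z'"
    then have "g*p dvd x" "g*p dvd y" "g*p dvd z"
      by (simp_all add: xyz' mult_dvd_mono)
    then have "g*p dvd g"
      unfolding g_def by (intro gcd_greatest)
    with \<open>g \<noteq> 0\<close> p show False
      by (metis dvd_times_left_cancel_iff mult.right_neutral not_prime_unit)
  qed
  define c where "c = a*x'^2 + b*y'^2 - z'^2"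
  have "[a*x^2 + b*y^2 = z^2] (mod p^(k + 2 * multiplicity p g))"
    using xyz by (simp only: g_def)
  then have dvd: "p^(k + 2 * multiplicity p g) dvd g^2 * c"
    by (simp add: cong_iff_dvd_diff xyz' c_def algebra_simps power2_eq_square)
  have "p^k dvd c"
  proof (cases "c = 0")
    case False
    note pe = prime_imp_prime_elem[OF p]
    have "k + 2 * multiplicity p g \<le> multiplicity p (g^2 * c)"
      using dvd False \<open>g \<noteq> 0\<close> p by (intro multiplicity_geI) (auto simp: not_prime_unit)
    also have "multiplicity p (g^2 * c) = multiplicity p (g^2) + multiplicity p c"
      using False \<open>g \<noteq> 0\<close> by (intro prime_elem_multiplicity_mult_distrib pe) simp_all
    also have "multiplicity p (g^2) = 2 * multiplicity p g"
      using pe \<open>g \<noteq> 0\<close> by (rule prime_elem_multiplicity_power_distrib)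
    finally show ?thesis
      by (intro multiplicity_dvd') simp
  qed simp
  then have "[a*x'^2 + b*y'^2 = z'^2] (mod p^k)"
    by (simp add: c_def cong_iff_dvd_diff)
  with primitive show ?thesis
    by blast
qed

lemma hilbert_split_atI:
  fixes a b p M :: int
  assumes p: "prime p" and M: "M \<noteq> 0"
    and sol: "\<And>K. \<exists>x y z. [a*x^2 + b*y^2 = z^2] (mod p^K) \<and> gcd x (gcd y z) dvd M"
  shows "hilbert_split_at a b p"
  unfolding hilbert_split_at_def
proof
  fix k
  obtain x y z where xyz: "[a*x^2 + b*y^2 = z^2] (mod p^(k + 2 * multiplicity p M))"
    and g: "gcd x (gcd y z) dvd M"
    using sol by blast
  have "gcd x (gcd y z) \<noteq> 0"
    using g M by auto
  moreover have "multiplicity p (gcd x (gcd y z)) \<le> multiplicity p M"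
    using g M by (rule dvd_imp_multiplicity_le)
  then have "p^(k + 2 * multiplicity p (gcd x (gcd y z))) dvd p^(k + 2 * multiplicity p M)"
    by (intro le_imp_power_dvd) simp
  with xyz have "[a*x^2 + b*y^2 = z^2] (mod p^(k + 2 * multiplicity p (gcd x (gcd y z))))"
    by (rule cong_dvd_modulus)
  ultimately show "\<exists>x y z. [a*x^2 + b*y^2 = z^2] (mod p^k) \<and> \<not> (p dvd x \<and> p dvd y \<and> p dvd z)"
    using conic_cong_primitive[OF p] by blast
qed

section \<open>Quaternion arithmetic\<close>

definition qpolar :: "rat \<Rightarrow> rat \<Rightarrow> quat \<Rightarrow> quat \<Rightarrow> rat" where
  "qpolar a b x y = qtr (qmul a b x (qconj y)) / 2"

lemma q0_qadd [simp]: "q0 (qadd x y) = q0 x + q0 y"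
  by (cases x; cases y) simp

lemma q0_qscale [simp]: "q0 (qscale c x) = c * q0 x"
  by (cases x) simp

lemma qscale_qadd: "qscale c (qadd x y) = qadd (qscale c x) (qscale c y)"
  by (cases x; cases y) (simp add: algebra_simps)

lemma qscale_qscale: "qscale c (qscale d x) = qscale (c * d) x"
  by (cases x) (simp add: algebra_simps)

lemma qscale_left_commute: "qscale c (qscale d x) = qscale d (qscale c x)"
  by (simp add: qscale_qscale mult.commute)

lemma qnorm_qscale: "qnorm a b (qscale c x) = c^2 * qnorm a b x"
  by (cases x) (simp add: algebra_simps power2_eq_square)

lemma qnorm_qmul: "qnorm a b (qmul a b x y) = qnorm a b x * qnorm a b y"
  by (cases x; cases y) (simp add: algebra_simps power2_eq_square)

lemma qnorm_qadd: "qnorm a b (qadd x y) = qnorm a b x + qnorm a b y + 2 * qpolar a b x y"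
  by (cases x; cases y) (simp add: qpolar_def qtr_def field_simps power2_eq_square)

lemma qpolar_self: "qpolar a b x x = qnorm a b x"
  by (cases x) (simp add: qpolar_def qtr_def field_simps power2_eq_square)

lemma qpolar_commute: "qpolar a b x y = qpolar a b y x"
  by (cases x; cases y) (simp add: qpolar_def qtr_def field_simps)

lemma qpolar_qadd_left: "qpolar a b (qadd x y) z = qpolar a b x z + qpolar a b y z"
  by (cases x; cases y; cases z) (simp add: qpolar_def qtr_def field_simps)

lemma qpolar_qscale_left: "qpolar a b (qscale c x) y = c * qpolar a b x y"
  by (cases x; cases y) (simp add: qpolar_def qtr_def field_simps)

lemma qpolar_qscale_right: "qpolar a b x (qscale c y) = c * qpolar a b x y"
  using qpolar_qscale_left qpolar_commute by metis

lemma qtr_eq_qnorm: "qtr x = qnorm a b (qadd x (qof 1)) - qnorm a b x - 1"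
  by (cases x) (simp add: qtr_def qof_def algebra_simps power2_eq_square)

lemma qpolar_pure:
  "qpolar a b (Quat 0 x1 x2 x3) (Quat 0 y1 y2 y3) = - a * x1 * y1 - b * x2 * y2 + a * b * x3 * y3"
  by (simp add: qpolar_def qtr_def)

text \<open>For pure \<open>x\<close> and \<open>y\<close> one has \<open>x y = - qpolar a b x y + qcross a b x y\<close>;
  \<open>qcross\<close> is the cross product.\<close>

definition qcross :: "rat \<Rightarrow> rat \<Rightarrow> quat \<Rightarrow> quat \<Rightarrow> quat" where
  "qcross a b x y = qadd (qmul a b x y) (qof (qpolar a b x y))"

lemma qcross_pure:
  assumes "q0 x = 0" "q0 y = 0"
  shows "q0 (qcross a b x y) = 0"
    and "qnorm a b (qcross a b x y) = qnorm a b x * qnorm a b y - (qpolar a b x y)^2"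
    and "qpolar a b x (qcross a b x y) = 0"
    and "qpolar a b y (qcross a b x y) = 0"
proof -
  obtain x1 x2 x3 y1 y2 y3 where xy: "x = Quat 0 x1 x2 x3" "y = Quat 0 y1 y2 y3"
    using assms by (cases x; cases y) auto
  show "q0 (qcross a b x y) = 0"
    by (simp add: xy qcross_def qpolar_def qtr_def qof_def field_simps)
  show "qnorm a b (qcross a b x y) = qnorm a b x * qnorm a b y - (qpolar a b x y)^2"
    by (simp add: xy qcross_def qpolar_def qtr_def qof_def field_simps power2_eq_square)
  show "qpolar a b x (qcross a b x y) = 0" "qpolar a b y (qcross a b x y) = 0"
    by (simp_all add: xy qcross_def qpolar_def qtr_def qof_def field_simps)
qed

lemma qcross_span:
  fixes a b X Y :: rat
  assumes "q0 x = 0" "q0 y = 0"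
  defines "z \<equiv> qadd (qadd (qscale X x) (qscale Y y)) (qcross a b x y)"
  shows "qnorm a b z = X^2 * qnorm a b x + 2 * X * Y * qpolar a b x y + Y^2 * qnorm a b y
           + (qnorm a b x * qnorm a b y - (qpolar a b x y)^2)"
    and "qpolar a b z (qcross a b x y) = qnorm a b x * qnorm a b y - (qpolar a b x y)^2"
  using qcross_pure[OF assms(1,2), of a b]
  by (simp_all add: z_def qnorm_qadd qnorm_qscale qpolar_qadd_left qpolar_qscale_left
      qpolar_qscale_right qpolar_self qpolar_commute[of _ _ "qcross a b x y"]
      algebra_simps power2_eq_square)

lemma qnorm_qadd_qscale:
  "qnorm a b (qadd y (qscale c x)) = qnorm a b y + 2 * c * qpolar a b x y + c^2 * qnorm a b x"
  by (simp add: qnorm_qadd qnorm_qscale qpolar_qscale_right qpolar_commute)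

lemma abs_qpolar_le_if_norm_minimal:
  assumes "\<forall>n::int. qnorm a b y \<le> qnorm a b (qadd y (qscale (of_int n) x))"
  shows "2 * \<bar>qpolar a b x y\<bar> \<le> qnorm a b x"
  using assms[rule_format, of 1] assms[rule_format, of "-1"]
  by (simp add: qnorm_qadd_qscale)

section \<open>Integrality in orders\<close>

fun qcoords :: "quat \<Rightarrow> rat set" where
  "qcoords (Quat x0 x1 x2 x3) = {x0, x1, x2, x3}"

lemma finite_qcoords [simp]: "finite (qcoords x)"
  by (cases x) simp

lemma qcoords_qscale: "qcoords (qscale c x) = (\<lambda>r. c * r) ` qcoords x"
  by (cases x) simp

definition quat_integral :: "quat \<Rightarrow> bool" where
  "quat_integral x \<longleftrightarrow> qcoords x \<subseteq> \<int>"

lemma quat_integral_qadd: "quat_integral x \<Longrightarrow> quat_integral y \<Longrightarrow> quat_integral (qadd x y)"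
  by (cases x; cases y) (simp add: quat_integral_def)

lemma quat_integral_qscale: "quat_integral x \<Longrightarrow> c \<in> \<int> \<Longrightarrow> quat_integral (qscale c x)"
  by (cases x) (simp add: quat_integral_def)

lemma qnorm_Ints_if_quat_integral:
  "a \<in> \<int> \<Longrightarrow> b \<in> \<int> \<Longrightarrow> quat_integral x \<Longrightarrow> qnorm a b x \<in> \<int>"
  by (cases x) (simp add: quat_integral_def)

lemma pure_quat_integralE:
  assumes "quat_integral x" "q0 x = 0"
  obtains x1 x2 x3 :: int where "x = Quat 0 (of_int x1) (of_int x2) (of_int x3)"
  using assms by (cases x) (auto simp: quat_integral_def elim!: Ints_cases)

lemma rat_common_denominator:
  "finite (S :: rat set) \<Longrightarrow> \<exists>L::int. L > 0 \<and> (\<forall>r\<in>S. of_int L * r \<in> \<int>)"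
proof (induction S rule: finite_induct)
  case empty
  show ?case
    by (intro exI[of _ 1]) simp
next
  case (insert r S)
  then obtain L where L: "L > 0" "\<forall>s\<in>S. of_int L * s \<in> \<int>"
    by blast
  obtain n d where "quotient_of r = (n, d)"
    by (cases "quotient_of r")
  then have r: "r = of_int n / of_int d" and d: "d > 0"
    by (simp_all add: quotient_of_div quotient_of_denom_pos)
  have "of_int (d * L) * s \<in> \<int>" if "s \<in> S" for s
    using L that by (metis Ints_mult Ints_of_int mult.assoc of_int_mult)
  moreover have "of_int (d * L) * r \<in> \<int>"
    using d by (simp add: r)
  ultimately show ?case
    using L d by (intro exI[of _ "d * L"]) auto
qed

lemma quat_common_denominator:
  assumes "finite S"
  shows "\<exists>L::int. L > 0 \<and> (\<forall>x\<in>S. quat_integral (qscale (of_int L) x))"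
proof -
  have "finite (\<Union> (qcoords ` S))"
    using assms by simp
  then obtain L where "L > 0" "\<forall>r\<in>\<Union> (qcoords ` S). of_int L * r \<in> \<int>"
    using rat_common_denominator by blast
  then show ?thesis
    by (intro exI[of _ L]) (auto simp: quat_integral_def qcoords_qscale)
qed

lemma order_common_denominator:
  assumes "is_order a b R"
  shows "\<exists>L::int. L > 0 \<and> (\<forall>x\<in>R. quat_integral (qscale (of_int L) x))"
proof -
  obtain e0 e1 e2 e3 where R: "R = {qadd (qadd (qscale (of_int c0) e0) (qscale (of_int c1) e1))
      (qadd (qscale (of_int c2) e2) (qscale (of_int c3) e3)) | c0 c1 c2 c3. True}"
    using assms unfolding is_order_def by blast
  obtain L where "L > 0" and L: "\<forall>e\<in>{e0, e1, e2, e3}. quat_integral (qscale (of_int L) e)"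
    using quat_common_denominator[of "{e0, e1, e2, e3}"] by auto
  have "quat_integral (qscale (of_int L) (qscale (of_int c) e))" if "e \<in> {e0, e1, e2, e3}" for c e
  proof -
    have "quat_integral (qscale (of_int c) (qscale (of_int L) e))"
      using L that by (auto intro: quat_integral_qscale)
    then show ?thesis
      by (metis qscale_left_commute)
  qed
  with \<open>L > 0\<close> show ?thesis
    by (intro exI[of _ L]) (auto simp: R qscale_qadd intro!: quat_integral_qadd)
qed

lemma Ints_if_bounded_denominator_powers:
  fixes r :: rat and L :: int
  assumes L: "L > 0" and pow: "\<And>n. of_int L * r ^ n \<in> \<int>"
  shows "r \<in> \<int>"
proof -
  obtain n d where "quotient_of r = (n, d)"
    by (cases "quotient_of r")
  then have r: "r = of_int n / of_int d" and d: "d > 0" and "coprime n d"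
    by (simp_all add: quotient_of_div quotient_of_denom_pos quotient_of_coprime)
  have "d ^ k dvd L" for k
  proof -
    obtain m where "of_int L * r ^ k = of_int m"
      using pow Ints_cases by blast
    then have "L * n ^ k = m * d ^ k"
      using d by (simp add: r field_simps flip: of_int_power of_int_mult)
    then have "d ^ k dvd L * n ^ k"
      by simp
    moreover have "coprime (d ^ k) (n ^ k)"
      using \<open>coprime n d\<close> by (simp add: coprime_commute)
    ultimately show ?thesis
      using coprime_dvd_mult_left_iff by blast
  qed
  have "d = 1"
  proof (rule ccontr)
    assume "d \<noteq> 1"
    with d have "2 ^ nat L \<le> d ^ nat L"
      by (intro power_mono) auto
    also have "\<dots> \<le> L"
      using \<open>d ^ nat L dvd L\<close> L by (rule zdvd_imp_le)
    finally have "2 ^ nat L \<le> L" .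
    moreover have "int (nat L) < int (2 ^ nat L)"
      using less_exp by (simp only: of_nat_less_iff)
    ultimately show False
      using L by simp
  qed
  then show ?thesis
    by (simp add: r)
qed

primrec qpow :: "rat \<Rightarrow> rat \<Rightarrow> quat \<Rightarrow> nat \<Rightarrow> quat" where
  "qpow a b x 0 = qof 1"
| "qpow a b x (Suc n) = qmul a b x (qpow a b x n)"

lemma qnorm_qpow: "qnorm a b (qpow a b x n) = qnorm a b x ^ n"
  by (induction n) (simp_all add: qof_def qnorm_qmul)

lemma qpow_in_order: "is_order a b R \<Longrightarrow> x \<in> R \<Longrightarrow> qpow a b x n \<in> R"
  by (induction n) (auto simp: is_order_def)

lemma order_qnorm_Ints:
  assumes R: "is_order (of_int a) (of_int b) R" and x: "x \<in> R"
  shows "qnorm (of_int a) (of_int b) x \<in> \<int>"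
proof -
  obtain L where L: "L > 0" "\<forall>y\<in>R. quat_integral (qscale (of_int L) y)"
    using order_common_denominator[OF R] by blast
  have "of_int (L^2) * qnorm (of_int a) (of_int b) x ^ n \<in> \<int>" for n
  proof -
    have "quat_integral (qscale (of_int L) (qpow (of_int a) (of_int b) x n))"
      using L qpow_in_order[OF R x] by blast
    then have "qnorm (of_int a) (of_int b) (qscale (of_int L) (qpow (of_int a) (of_int b) x n)) \<in> \<int>"
      by (intro qnorm_Ints_if_quat_integral) simp_all
    then show ?thesis
      by (simp add: qnorm_qscale qnorm_qpow)
  qed
  moreover have "L^2 > 0"
    using L(1) by simp
  ultimately show ?thesis
    using Ints_if_bounded_denominator_powers by blast
qed

lemma order_qtr_Ints:
  assumes R: "is_order (of_int a) (of_int b) R" and x: "x \<in> R"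
  shows "qtr x \<in> \<int>"
proof -
  have "qadd x (qof 1) \<in> R"
    using R x by (simp add: is_order_def)
  then show ?thesis
    using order_qnorm_Ints[OF R] x qtr_eq_qnorm[of x "of_int a" "of_int b"] by simp
qed

section \<open>Gram matrices in the Gross lattice\<close>

lemma gross_lattice_pure: "\<beta> \<in> gross_lattice R \<Longrightarrow> q0 \<beta> = 0"
  by (auto simp: gross_lattice_def qsub_def qof_def qtr_def elim!: q0.elims)

lemma qnorm_gross: "qnorm a b (qsub (qscale 2 x) (qof (qtr x))) = 4 * qnorm a b x - (qtr x)^2"
  by (cases x) (simp add: qsub_def qof_def qtr_def algebra_simps power2_eq_square)

lemma qpolar_gross:
  "qpolar a b (qsub (qscale 2 x) (qof (qtr x))) (qsub (qscale 2 y) (qof (qtr y)))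
     = 4 * qpolar a b x y - qtr x * qtr y"
  by (cases x; cases y) (simp add: qpolar_def qsub_def qof_def qtr_def field_simps)

lemma gross_lattice_gram:
  assumes R: "is_order (of_int a) (of_int b) R"
    and \<beta>: "\<beta> \<in> gross_lattice R" and \<gamma>: "\<gamma> \<in> gross_lattice R"
  obtains N1 N2 t :: int
  where "qnorm (of_int a) (of_int b) \<beta> = of_int N1" "qnorm (of_int a) (of_int b) \<gamma> = of_int N2"
    and "qpolar (of_int a) (of_int b) \<beta> \<gamma> = of_int t" and "4 dvd t^2 - N1 * N2"
proof -
  let ?N = "qnorm (of_int a) (of_int b)"
  obtain x y where x: "x \<in> R" "\<beta> = qsub (qscale 2 x) (qof (qtr x))"
    and y: "y \<in> R" "\<gamma> = qsub (qscale 2 y) (qof (qtr y))"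
    using \<beta> \<gamma> unfolding gross_lattice_def by blast
  have "qadd x y \<in> R"
    using R x y by (simp add: is_order_def)
  then obtain n1 n2 n12 T1 T2 :: int
    where n: "?N x = of_int n1" "?N y = of_int n2" "?N (qadd x y) = of_int n12"
      and T: "qtr x = of_int T1" "qtr y = of_int T2"
    using order_qnorm_Ints[OF R] order_qtr_Ints[OF R] x y by (metis Ints_cases)
  have "2 * qpolar (of_int a) (of_int b) x y = of_int (n12 - n1 - n2)"
    using qnorm_qadd[of "of_int a" "of_int b" x y] n by simp
  moreover have "qpolar (of_int a) (of_int b) \<beta> \<gamma>
      = 2 * (2 * qpolar (of_int a) (of_int b) x y) - qtr x * qtr y"
    unfolding x(2) y(2) qpolar_gross by simp
  ultimately have "qpolar (of_int a) (of_int b) \<beta> \<gamma> = of_int (2 * (n12 - n1 - n2) - T1 * T2)"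
    using T by simp
  moreover have "?N \<beta> = of_int (4 * n1 - T1^2)" "?N \<gamma> = of_int (4 * n2 - T2^2)"
    unfolding x(2) y(2) qnorm_gross using n T by simp_all
  moreover have "4 dvd (2 * (n12 - n1 - n2) - T1 * T2)^2 - (4 * n1 - T1^2) * (4 * n2 - T2^2)"
  proof -
    have "(2 * (n12 - n1 - n2) - T1 * T2)^2 - (4 * n1 - T1^2) * (4 * n2 - T2^2)
        = 4 * ((n12 - n1 - n2)^2 - (n12 - n1 - n2) * T1 * T2 - 4 * n1 * n2 + n1 * T2^2 + n2 * T1^2)"
      by (simp add: algebra_simps power2_eq_square)
    then show ?thesis
      by simp
  qed
  ultimately show thesis
    using that by blast
qed

lemma conic_point_of_pure_quat:
  fixes a b L n d :: int
  assumes pure: "q0 z = 0" "q0 w = 0"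
    and integral: "quat_integral (qscale (of_int L) z)" "quat_integral (qscale (of_int L) w)"
    and n: "qnorm (of_int a) (of_int b) z = of_int n"
    and d: "qpolar (of_int a) (of_int b) z w = of_int d"
  shows "\<exists>x y u. a*x^2 + b*y^2 - u^2 = - (a*b) * (L^2 * n) \<and> gcd x (gcd y u) dvd L^2 * d"
proof -
  obtain Z1 Z2 Z3 where Z: "qscale (of_int L) z = Quat 0 (of_int Z1) (of_int Z2) (of_int Z3)"
    using integral(1) pure(1) by (auto elim!: pure_quat_integralE)
  obtain W1 W2 W3 where W: "qscale (of_int L) w = Quat 0 (of_int W1) (of_int W2) (of_int W3)"
    using integral(2) pure(2) by (auto elim!: pure_quat_integralE)
  have "of_int (- a*Z1^2 - b*Z2^2 + a*b*Z3^2) = qnorm (of_int a) (of_int b) (qscale (of_int L) z)"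
    unfolding Z by simp
  also have "\<dots> = of_int (L^2 * n)"
    by (simp add: qnorm_qscale n)
  finally have norm: "- a*Z1^2 - b*Z2^2 + a*b*Z3^2 = L^2 * n"
    by (simp only: of_int_eq_iff)
  have "of_int (- a*Z1*W1 - b*Z2*W2 + a*b*Z3*W3)
      = qpolar (of_int a) (of_int b) (qscale (of_int L) z) (qscale (of_int L) w)"
    unfolding Z W by (simp add: qpolar_pure)
  also have "\<dots> = of_int (L^2 * d)"
    by (simp add: qpolar_qscale_left qpolar_qscale_right d power2_eq_square)
  finally have polar: "- a*Z1*W1 - b*Z2*W2 + a*b*Z3*W3 = L^2 * d"
    by (simp only: of_int_eq_iff)
  show ?thesis
  proof (intro exI conjI)
    have "a*(b*Z2)^2 + b*(a*Z1)^2 - (a*b*Z3)^2 = - (a*b) * (- a*Z1^2 - b*Z2^2 + a*b*Z3^2)"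
      by (simp add: algebra_simps power2_eq_square)
    then show "a*(b*Z2)^2 + b*(a*Z1)^2 - (a*b*Z3)^2 = - (a*b) * (L^2 * n)"
      by (simp only: norm)
    let ?g = "gcd (b*Z2) (gcd (a*Z1) (a*b*Z3))"
    have "?g dvd b*Z2" "?g dvd a*Z1" "?g dvd a*b*Z3"
      by (auto intro: dvd_trans)
    then have "?g dvd (a*Z1)*(-W1) + (b*Z2)*(-W2) + (a*b*Z3)*W3"
      by (intro dvd_add) simp_all
    moreover have "(a*Z1)*(-W1) + (b*Z2)*(-W2) + (a*b*Z3)*W3 = L^2 * d"
      using polar by (simp add: algebra_simps)
    ultimately show "?g dvd L^2 * d"
      by (simp only:)
  qed
qed

lemma prime_dvd_gram_det_if_not_split:
  fixes p a b N1 N2 t :: int and \<beta> \<gamma> :: quat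
  assumes p: "prime p" "p \<noteq> 2" and not_split: "\<not> hilbert_split_at a b p"
    and pure: "q0 \<beta> = 0" "q0 \<gamma> = 0"
    and N1: "qnorm (of_int a) (of_int b) \<beta> = of_int N1"
    and N2: "qnorm (of_int a) (of_int b) \<gamma> = of_int N2"
    and t: "qpolar (of_int a) (of_int b) \<beta> \<gamma> = of_int t"
  shows "p dvd N1 * N2 - t^2"
proof (rule ccontr)
  define D where "D = N1 * N2 - t^2"
  define w where "w = qcross (of_int a) (of_int b) \<beta> \<gamma>"
  assume "\<not> p dvd N1 * N2 - t^2"
  then have D: "\<not> p dvd N1 * N2 - t^2" "\<not> p dvd -D" "D \<noteq> 0"
    unfolding D_def by (auto simp: dvd_diff_commute)
  obtain L where "L > 0" and L: "\<forall>x\<in>{\<beta>, \<gamma>, w}. quat_integral (qscale (of_int L) x)"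
    using quat_common_denominator[of "{\<beta>, \<gamma>, w}"] by auto
  have "hilbert_split_at a b p"
  proof (rule hilbert_split_atI[OF p(1)])
    show "L^2 * D \<noteq> 0"
      using \<open>L > 0\<close> D by simp
    fix K
    obtain X Y where XY: "[N1*X^2 + 2*t*X*Y + N2*Y^2 = -D] (mod p^K)"
      using binary_form_cong_prime_power[OF p D(1,2)] by blast
    define z where "z = qadd (qadd (qscale (of_int X) \<beta>) (qscale (of_int Y) \<gamma>)) w"
    have "qnorm (of_int a) (of_int b) z = of_int (N1*X^2 + 2*t*X*Y + N2*Y^2 + D)"
      and "qpolar (of_int a) (of_int b) z w = of_int D"
      using qcross_span[OF pure, of "of_int a" "of_int b" "of_int X" "of_int Y"] N1 N2 t
      by (simp_all add: z_def w_def D_def)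
    moreover have "q0 z = 0" "q0 w = 0"
      using pure qcross_pure(1)[OF pure] by (simp_all add: z_def w_def)
    moreover have "quat_integral (qscale (of_int L) z)"
      using L by (auto simp: z_def qscale_qadd qscale_left_commute[of "of_int L"]
          intro!: quat_integral_qadd quat_integral_qscale)
    ultimately obtain x y u
      where conic: "a*x^2 + b*y^2 - u^2 = - (a*b) * (L^2 * (N1*X^2 + 2*t*X*Y + N2*Y^2 + D))"
      and "gcd x (gcd y u) dvd L^2 * D"
      using conic_point_of_pure_quat L by blast
    moreover have "p^K dvd N1*X^2 + 2*t*X*Y + N2*Y^2 + D"
      using XY by (simp add: cong_iff_dvd_diff)
    then have "[a*x^2 + b*y^2 = u^2] (mod p^K)"
      unfolding cong_iff_dvd_diff conic by simp
    ultimately show "\<exists>x y u. [a*x^2 + b*y^2 = u^2] (mod p^K) \<and> gcd x (gcd y u) dvd L^2 * D"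
      by blast
  qed
  with not_split show False
    by contradiction
qed

lemma gross_lattice_gram_cong:
  assumes p: "prime p" and not_split: "\<not> hilbert_split_at a b p"
    and R: "is_order (of_int a) (of_int b) R"
    and \<beta>: "\<beta> \<in> gross_lattice R" and \<gamma>: "\<gamma> \<in> gross_lattice R"
  obtains N1 N2 t :: int
  where "qnorm (of_int a) (of_int b) \<beta> = of_int N1" "qnorm (of_int a) (of_int b) \<gamma> = of_int N2"
    and "qpolar (of_int a) (of_int b) \<beta> \<gamma> = of_int t" and "[t^2 = N1 * N2] (mod p)"
proof -
  obtain N1 N2 t where N1: "qnorm (of_int a) (of_int b) \<beta> = of_int N1"
    and N2: "qnorm (of_int a) (of_int b) \<gamma> = of_int N2"
    and t: "qpolar (of_int a) (of_int b) \<beta> \<gamma> = of_int t" and "4 dvd t^2 - N1 * N2"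
    using gross_lattice_gram[OF R \<beta> \<gamma>] by blast
  have "[t^2 = N1 * N2] (mod p)"
  proof (cases "p = 2")
    case True
    have "(2::int) dvd 4"
      by simp
    then have "2 dvd t^2 - N1 * N2"
      using \<open>4 dvd t^2 - N1 * N2\<close> by (rule dvd_trans)
    with True show ?thesis
      by (simp only: cong_iff_dvd_diff)
  next
    case False
    with p not_split \<beta> \<gamma> N1 N2 t have "p dvd N1 * N2 - t^2"
      by (intro prime_dvd_gram_det_if_not_split) (auto intro: gross_lattice_pure)
    then show ?thesis
      by (simp add: cong_iff_dvd_diff dvd_diff_commute)
  qed
  with N1 N2 t show thesis
    using that by blast
qed

theorem corollary3p14:
  fixes p a b :: int and R :: "quat set" and \<beta>1 \<beta>2 :: quat
  assumes "prime p"
    and "ramified_exactly_at_p_inf p a b"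
    and "is_order (of_int a) (of_int b) R"
    and "\<beta>1 \<in> gross_lattice R" and "\<beta>2 \<in> gross_lattice R"
    and "\<forall>c d::rat. qadd (qscale c \<beta>1) (qscale d \<beta>2) = qof 0 \<longrightarrow> c = 0 \<and> d = 0"
    and "qnorm (of_int a) (of_int b) \<beta>1 \<le> of_int p"
    and "\<forall>n::int. qnorm (of_int a) (of_int b) \<beta>2
                 \<le> qnorm (of_int a) (of_int b) (qadd \<beta>2 (qscale (of_int n) \<beta>1))"
  shows "\<bar>qtr (qmul (of_int a) (of_int b) \<beta>1 (qconj \<beta>2)) / 2\<bar>
       = of_nat (LEAST t::nat. \<exists>k::int.
            of_nat t ^ 2 - qnorm (of_int a) (of_int b) \<beta>1 * qnorm (of_int a) (of_int b) \<beta>2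
              = of_int (p * k))"
proof -
  have not_split: "\<not> hilbert_split_at a b p"
    using assms(1,2) by (simp add: ramified_exactly_at_p_inf_def)
  obtain N1 N2 t where N1: "qnorm (of_int a) (of_int b) \<beta>1 = of_int N1"
    and N2: "qnorm (of_int a) (of_int b) \<beta>2 = of_int N2"
    and t: "qpolar (of_int a) (of_int b) \<beta>1 \<beta>2 = of_int t" and "[t^2 = N1 * N2] (mod p)"
    using gross_lattice_gram_cong[OF assms(1) not_split assms(3-5)] by blast
  moreover have "2 * \<bar>t\<bar> \<le> p"
    using abs_qpolar_le_if_norm_minimal[OF assms(8)] assms(7) N1 t by simp
  ultimately have "(LEAST s::nat. [int s ^ 2 = N1 * N2] (mod p)) = nat \<bar>t\<bar>"
    using Least_square_root_cong_prime[OF assms(1)] by blast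
  moreover have "(\<exists>k::int. of_nat s ^ 2 - of_int N1 * of_int N2 = (of_int (p * k) :: rat))
      \<longleftrightarrow> [int s ^ 2 = N1 * N2] (mod p)" for s :: nat
    unfolding cong_iff_dvd_diff dvd_def by (simp flip: of_int_eq_iff[where 'a = rat])
  ultimately show ?thesis
    by (simp add: N1 N2 t flip: qpolar_def)
qed

end
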